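(* Let $\mathbb R$ be equipped with the usual metric $|\cdot|$ and base point $0$. If $f\colon\mathbb R\to\mathbb R$ is a Lipschitz map with $f(0)=0$ such that $\widehat f\colon\mathcal F(\mathbb R)\to\mathcal F(\mathbb R)$ is compact, then $f=0$ (so the only compact operator of the form $\widehat f$ on $\mathcal F(\mathbb R)$ is $0$).
   Context: Scalars are $\mathbb K=\mathbb R$ or $\mathbb C$. For a pointed metric space $(M,d,0_M)$, $\mathrm{Lip}_0(M)$ denotes the Banach space of Lipschitz functions $g\colon M\to\mathbb K$ with $g(0_M)=0$ normed by the best Lipschitz constant; $\delta(x)\in\mathrm{Lip}_0(M)^*$ is evaluation at $x$; the Lipschitz-free space $\mathcal F(M)$ is the norm-closed linear span of $\{\delta(x):x\in M\}$ in $\mathrm{Lip}_0(M)^*$. For a Lipschitz map $f\colon M\to N$ with $f(0_M)=0_N$, $\widehat f\colon\mathcal F(M)\to\mathcal F(N)$ is the unique bounded linear operator with $\widehat f(\delta(x))=\delta(f(x))$ for all $x\in M$. *)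

theory Defs
  imports "HOL-Analysis.Analysis"
begin

text \<open>Lipschitz-free space over the pointed metric space (R, |.|, 0), real scalars.
Elements of Lip0(R)^* are represented as functions (real => real) => real that
vanish outside Lip0(R).\<close>

definition Lip0 :: "(real \<Rightarrow> real) set" where
  "Lip0 = {g. g 0 = 0 \<and> (\<exists>C. C-lipschitz_on UNIV g)}"

definition lipnorm :: "(real \<Rightarrow> real) \<Rightarrow> real" where
  "lipnorm g = Inf {C. C-lipschitz_on UNIV g}"

definition dnorm :: "((real \<Rightarrow> real) \<Rightarrow> real) \<Rightarrow> real" where
  "dnorm \<phi> = Sup {\<bar>\<phi> g\<bar> | g. g \<in> Lip0 \<and> lipnorm g \<le> 1}"

definition delta :: "real \<Rightarrow> (real \<Rightarrow> real) \<Rightarrow> real" where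
  "delta x = (\<lambda>g. if g \<in> Lip0 then g x else 0)"

text \<open>Norm-closure in Lip0(R)^* of the linear span of the evaluation functionals.\<close>
definition FreeR :: "((real \<Rightarrow> real) \<Rightarrow> real) set" where
  "FreeR = {\<phi>. (\<forall>g. g \<notin> Lip0 \<longrightarrow> \<phi> g = 0) \<and>
      (\<forall>\<epsilon>>0. \<exists>n::nat. \<exists>a x. \<forall>g. g \<in> Lip0 \<and> lipnorm g \<le> 1 \<longrightarrow>
          \<bar>\<phi> g - (\<Sum>i<n. a i * delta (x i) g)\<bar> \<le> \<epsilon>)}"

definition linear_on_FreeR :: "(((real \<Rightarrow> real) \<Rightarrow> real) \<Rightarrow> ((real \<Rightarrow> real) \<Rightarrow> real)) \<Rightarrow> bool" where
  "linear_on_FreeR T \<longleftrightarrow> (\<forall>\<phi>\<in>FreeR. T \<phi> \<in> FreeR) \<and>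
     (\<forall>\<phi>\<in>FreeR. \<forall>\<psi>\<in>FreeR. \<forall>a b::real. T (\<lambda>g. a * \<phi> g + b * \<psi> g) = (\<lambda>g. a * T \<phi> g + b * T \<psi> g))"

definition bounded_on_FreeR :: "(((real \<Rightarrow> real) \<Rightarrow> real) \<Rightarrow> ((real \<Rightarrow> real) \<Rightarrow> real)) \<Rightarrow> bool" where
  "bounded_on_FreeR T \<longleftrightarrow> (\<exists>C. \<forall>\<phi>\<in>FreeR. dnorm (T \<phi>) \<le> C * dnorm \<phi>)"

definition compact_on_FreeR :: "(((real \<Rightarrow> real) \<Rightarrow> real) \<Rightarrow> ((real \<Rightarrow> real) \<Rightarrow> real)) \<Rightarrow> bool" where
  "compact_on_FreeR T \<longleftrightarrow> (\<forall>\<phi>::nat \<Rightarrow> ((real \<Rightarrow> real) \<Rightarrow> real).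
     (\<forall>n. \<phi> n \<in> FreeR \<and> dnorm (\<phi> n) \<le> 1) \<longrightarrow>
     (\<exists>r \<psi>. strict_mono r \<and> \<psi> \<in> FreeR \<and>
        (\<lambda>n. dnorm (\<lambda>g. T (\<phi> (r n)) g - \<psi> g)) \<longlonglongrightarrow> 0))"

end

theory Submission
  imports Defs
begin

text \<open>Suppose \<open>f a \<noteq> f b\<close>. Repeated bisection of \<open>[a, b]\<close> yields intervals \<open>[X k, Y k]\<close> of
length \<open>(b - a) / 2 ^ k\<close> on which the slope of \<open>f\<close> is at least some \<open>c > 0\<close>. The molecules
\<open>(\<delta>(Y k) - \<delta>(X k)) / (Y k - X k)\<close> lie in the unit ball, and \<open>T\<close> maps them to
\<open>(\<delta>(f (Y k)) - \<delta>(f (X k))) / (Y k - X k)\<close>. For \<open>k < l\<close>, testing against the 1-Lipschitz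
retraction of \<open>\<real>\<close> onto the segment between \<open>f (X l)\<close> and \<open>f (Y l)\<close> shows that the images of the
\<open>k\<close>-th and \<open>l\<close>-th molecule are at distance at least \<open>c / 2\<close>, so no subsequence of the images
converges, contradicting compactness.\<close>

lemma Lip0_abs_diff_le_lipnorm:
  assumes "g \<in> Lip0"
  shows "\<bar>g y - g x\<bar> \<le> lipnorm g * \<bar>y - x\<bar>"
proof (cases "x = y")
  case True then show ?thesis by simp
next
  case False
  obtain C0 where C0: "C0-lipschitz_on UNIV g" using assms unfolding Lip0_def by blast
  have "\<bar>g y - g x\<bar> / \<bar>y - x\<bar> \<le> lipnorm g"
    unfolding lipnorm_def
  proof (rule cInf_greatest)
    show "{C. C-lipschitz_on UNIV g} \<noteq> {}" using C0 by blast
  next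
    fix C assume "C \<in> {C. C-lipschitz_on UNIV g}"
    then have "dist (g y) (g x) \<le> C * dist y x" by (auto simp: lipschitz_on_def)
    then show "\<bar>g y - g x\<bar> / \<bar>y - x\<bar> \<le> C" using False
      by (simp add: dist_real_def divide_le_eq)
  qed
  then show ?thesis using False by (simp add: divide_le_eq mult.commute)
qed

lemma lipnorm_le_if_lipschitz:
  assumes "C-lipschitz_on UNIV g"
  shows "lipnorm g \<le> C"
  unfolding lipnorm_def
proof (rule cInf_lower)
  show "C \<in> {C. C-lipschitz_on UNIV g}" using assms by blast
  show "bdd_below {C. C-lipschitz_on UNIV g}"
    by (rule bdd_belowI[of _ 0]) (auto dest: lipschitz_on_nonneg)
qed

lemma FreeR_bounded_on_unit_ball:
  assumes "\<phi> \<in> FreeR"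
  shows "\<exists>B. \<forall>h. h \<in> Lip0 \<and> lipnorm h \<le> 1 \<longrightarrow> \<bar>\<phi> h\<bar> \<le> B"
proof -
  obtain n a x where approx: "\<forall>g. g \<in> Lip0 \<and> lipnorm g \<le> 1 \<longrightarrow>
          \<bar>\<phi> g - (\<Sum>i<(n::nat). a i * delta (x i) g)\<bar> \<le> 1"
    using assms unfolding FreeR_def mem_Collect_eq by (metis zero_less_one)
  have "\<bar>\<phi> h\<bar> \<le> 1 + (\<Sum>i<n. \<bar>a i\<bar> * \<bar>x i\<bar>)" if h: "h \<in> Lip0" "lipnorm h \<le> 1" for h
  proof -
    have "\<bar>\<Sum>i<n. a i * delta (x i) h\<bar> \<le> (\<Sum>i<n. \<bar>a i * delta (x i) h\<bar>)"
      by (rule sum_abs)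
    also have "\<dots> \<le> (\<Sum>i<n. \<bar>a i\<bar> * \<bar>x i\<bar>)"
    proof (rule sum_mono)
      fix i
      have "\<bar>h (x i) - h 0\<bar> \<le> lipnorm h * \<bar>x i - 0\<bar>" by (rule Lip0_abs_diff_le_lipnorm[OF h(1)])
      also have "\<dots> \<le> \<bar>x i\<bar>" using mult_right_mono[OF h(2), of "\<bar>x i\<bar>"] by simp
      finally have "\<bar>h (x i)\<bar> \<le> \<bar>x i\<bar>" using h(1) by (simp add: Lip0_def)
      then show "\<bar>a i * delta (x i) h\<bar> \<le> \<bar>a i\<bar> * \<bar>x i\<bar>"
        using h(1) by (simp add: delta_def abs_mult mult_left_mono)
    qed
    finally show ?thesis using approx h by fastforce
  qed
  then show ?thesis by blast
qed

lemma abs_diff_le_dnorm_diff: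
  assumes "\<phi> \<in> FreeR" "\<psi> \<in> FreeR" "g \<in> Lip0" "lipnorm g \<le> 1"
  shows "\<bar>\<phi> g - \<psi> g\<bar> \<le> dnorm (\<lambda>h. \<phi> h - \<psi> h)"
proof -
  obtain B1 where B1: "\<forall>h. h \<in> Lip0 \<and> lipnorm h \<le> 1 \<longrightarrow> \<bar>\<phi> h\<bar> \<le> B1"
    using FreeR_bounded_on_unit_ball[OF assms(1)] by blast
  obtain B2 where B2: "\<forall>h. h \<in> Lip0 \<and> lipnorm h \<le> 1 \<longrightarrow> \<bar>\<psi> h\<bar> \<le> B2"
    using FreeR_bounded_on_unit_ball[OF assms(2)] by blast
  have "bdd_above {\<bar>\<phi> h - \<psi> h\<bar> | h. h \<in> Lip0 \<and> lipnorm h \<le> 1}"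
  proof (rule bdd_aboveI[of _ "B1 + B2"])
    fix z assume "z \<in> {\<bar>\<phi> h - \<psi> h\<bar> | h. h \<in> Lip0 \<and> lipnorm h \<le> 1}"
    then obtain h where "h \<in> Lip0" "lipnorm h \<le> 1" "z = \<bar>\<phi> h - \<psi> h\<bar>" by blast
    with B1 B2 show "z \<le> B1 + B2" by fastforce
  qed
  then show ?thesis
    unfolding dnorm_def using assms(3,4) by (auto intro!: cSup_upper)
qed

lemma delta_in_FreeR: "delta x \<in> FreeR"
  unfolding FreeR_def
proof (intro CollectI conjI allI impI)
  fix g assume "g \<notin> Lip0" then show "delta x g = 0" by (simp add: delta_def)
next
  fix e :: real assume "e > 0"
  show "\<exists>n::nat. \<exists>a xa. \<forall>g. g \<in> Lip0 \<and> lipnorm g \<le> 1 \<longrightarrow>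
          \<bar>delta x g - (\<Sum>i<n. a i * delta (xa i) g)\<bar> \<le> e"
    by (rule exI[of _ 1], rule exI[of _ "\<lambda>_. 1"], rule exI[of _ "\<lambda>_. x"]) (use \<open>e > 0\<close> in simp)
qed

text \<open>Written as a linear combination so that \<open>linear_on_FreeR\<close> applies to it literally.\<close>
definition molecule :: "real \<Rightarrow> real \<Rightarrow> (real \<Rightarrow> real) \<Rightarrow> real" where
  "molecule x y = (\<lambda>g. (1 / (y - x)) * delta y g + (- (1 / (y - x))) * delta x g)"

lemma molecule_apply:
  assumes "g \<in> Lip0"
  shows "molecule x y g = (g y - g x) / (y - x)"
  using assms by (simp add: molecule_def delta_def diff_divide_distrib)

lemma molecule_in_FreeR: "molecule x y \<in> FreeR"
  unfolding FreeR_def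
proof (intro CollectI conjI allI impI)
  fix g assume "g \<notin> Lip0" then show "molecule x y g = 0" by (simp add: molecule_def delta_def)
next
  fix e :: real assume "e > 0"
  show "\<exists>n::nat. \<exists>a z. \<forall>g. g \<in> Lip0 \<and> lipnorm g \<le> 1 \<longrightarrow>
          \<bar>molecule x y g - (\<Sum>i<n. a i * delta (z i) g)\<bar> \<le> e"
    by (rule exI[of _ 2], rule exI[of _ "\<lambda>i. if i = 0 then 1 / (y - x) else - (1 / (y - x))"],
        rule exI[of _ "\<lambda>i. if i = 0 then y else x"])
       (use \<open>e > 0\<close> in \<open>simp add: molecule_def lessThan_nat_numeral\<close>)
qed

lemma zero_in_Lip0_unit_ball: "(\<lambda>_. 0::real) \<in> Lip0" "lipnorm (\<lambda>_. 0::real) \<le> 1"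
proof -
  have zero_lipschitz: "0-lipschitz_on UNIV (\<lambda>_. 0::real)" by (simp add: lipschitz_on_def)
  then show "(\<lambda>_. 0::real) \<in> Lip0" by (auto simp: Lip0_def)
  show "lipnorm (\<lambda>_. 0::real) \<le> 1" using lipnorm_le_if_lipschitz[OF zero_lipschitz] by simp
qed

lemma dnorm_molecule_le_1:
  assumes "x \<noteq> y"
  shows "dnorm (molecule x y) \<le> 1"
  unfolding dnorm_def
proof (rule cSup_least)
  show "{\<bar>molecule x y g\<bar> |g. g \<in> Lip0 \<and> lipnorm g \<le> 1} \<noteq> {}"
    using zero_in_Lip0_unit_ball by blast
next
  fix z assume "z \<in> {\<bar>molecule x y g\<bar> |g. g \<in> Lip0 \<and> lipnorm g \<le> 1}"
  then obtain g where g: "g \<in> Lip0" "lipnorm g \<le> 1" "z = \<bar>molecule x y g\<bar>" by blast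
  have "\<bar>g y - g x\<bar> \<le> lipnorm g * \<bar>y - x\<bar>" by (rule Lip0_abs_diff_le_lipnorm[OF g(1)])
  then have "z \<le> lipnorm g"
    using g assms by (simp add: molecule_apply abs_divide divide_le_eq)
  with g(2) show "z \<le> 1" by linarith
qed

lemma image_of_molecule:
  assumes "linear_on_FreeR T" and "\<forall>x. T (delta x) = delta (f x)" and "g \<in> Lip0"
  shows "T (molecule x y) g = (g (f y) - g (f x)) / (y - x)"
proof -
  have "T (molecule x y) = (\<lambda>h. (1 / (y - x)) * T (delta y) h + (- (1 / (y - x))) * T (delta x) h)"
    using assms(1) delta_in_FreeR unfolding linear_on_FreeR_def molecule_def by blast
  then show ?thesis using assms(2,3) by (simp add: delta_def diff_divide_distrib)
qed

lemma exists_Lip0_retraction_onto_segment: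
  fixes p q :: real
  obtains g where "g \<in> Lip0" "lipnorm g \<le> 1" "\<bar>g p - g q\<bar> = \<bar>p - q\<bar>"
    "\<And>u v. \<bar>g u - g v\<bar> \<le> \<bar>p - q\<bar>"
proof -
  define lo where "lo = min p q"
  define hi where "hi = max p q"
  define g where "g t = max lo (min hi t) - max lo (min hi 0)" for t
  have "lo \<le> hi" by (simp add: lo_def hi_def)
  then have g_lipschitz: "1-lipschitz_on UNIV g"
    unfolding lipschitz_on_def g_def dist_real_def by (auto simp: max_def min_def abs_if)
  show ?thesis
  proof
    show "g \<in> Lip0" using g_lipschitz by (auto simp: Lip0_def g_def)
    show "lipnorm g \<le> 1" by (rule lipnorm_le_if_lipschitz[OF g_lipschitz])
    show "\<bar>g p - g q\<bar> = \<bar>p - q\<bar>"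
      unfolding g_def lo_def hi_def by (auto simp: max_def min_def abs_if)
    show "\<bar>g u - g v\<bar> \<le> \<bar>p - q\<bar>" for u v
      unfolding g_def lo_def hi_def by (auto simp: max_def min_def abs_if)
  qed
qed

text \<open>The quotients are the values of \<open>T\<close> on two molecules (see \<open>image_of_molecule\<close>).\<close>
lemma exists_Lip0_separating_difference_quotients:
  fixes f :: "real \<Rightarrow> real"
  assumes "x < y" "u < v" "2 * (y - x) \<le> v - u" "c * (y - x) \<le> \<bar>f y - f x\<bar>"
  obtains g where "g \<in> Lip0" "lipnorm g \<le> 1"
    "c / 2 \<le> \<bar>(g (f y) - g (f x)) / (y - x) - (g (f v) - g (f u)) / (v - u)\<bar>"
proof -
  define J where "J = \<bar>f y - f x\<bar>"
  obtain g where g: "g \<in> Lip0" "lipnorm g \<le> 1" "\<bar>g (f y) - g (f x)\<bar> = J"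
    "\<And>s t. \<bar>g s - g t\<bar> \<le> J"
    using exists_Lip0_retraction_onto_segment[of "f y" "f x"] unfolding J_def by metis
  define p where "p = (g (f y) - g (f x)) / (y - x)"
  define q where "q = (g (f v) - g (f u)) / (v - u)"
  have J_nonneg: "0 \<le> J" by (simp add: J_def)
  have p: "\<bar>p\<bar> = J / (y - x)"
    using g(3) assms(1) by (simp add: p_def abs_divide)
  have "\<bar>q\<bar> \<le> J / (v - u)"
    using g(4) assms(2) by (simp add: q_def abs_divide divide_right_mono)
  also have "\<dots> \<le> J / (2 * (y - x))"
    using assms(1,3) J_nonneg by (intro divide_left_mono) auto
  finally have q: "\<bar>q\<bar> \<le> J / (2 * (y - x))" .
  have "c / 2 \<le> J / (2 * (y - x))" using assms(1,4) by (simp add: J_def field_simps)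
  also have "\<dots> = J / (y - x) - J / (2 * (y - x))"
    by (metis field_sum_of_halves divide_divide_eq_left mult.commute add_diff_cancel)
  also have "\<dots> \<le> \<bar>p - q\<bar>"
    using p q abs_triangle_ineq2[of p q] by argo
  finally show ?thesis using g(1,2) that unfolding p_def q_def by blast
qed

lemma dyadic_subinterval_with_slope_ge:
  fixes f :: "real \<Rightarrow> real"
  assumes "a < b" "c * (b - a) \<le> \<bar>f b - f a\<bar>"
  shows "\<exists>x y. x < y \<and> y - x = (b - a) / 2 ^ k \<and> c * (y - x) \<le> \<bar>f y - f x\<bar>"
proof (induction k)
  case 0 then show ?case using assms by auto
next
  case (Suc k)
  then obtain x y where xy: "x < y" "y - x = (b - a) / 2 ^ k" "c * (y - x) \<le> \<bar>f y - f x\<bar>"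
    by blast
  define m where "m = (x + y) / 2"
  have "c * (y - x) = c * (m - x) + c * (y - m)" by (simp add: m_def field_simps)
  moreover have "\<bar>f y - f x\<bar> \<le> \<bar>f m - f x\<bar> + \<bar>f y - f m\<bar>" by linarith
  ultimately have "c * (m - x) \<le> \<bar>f m - f x\<bar> \<or> c * (y - m) \<le> \<bar>f y - f m\<bar>"
    using xy(3) by linarith
  moreover have "m - x = (b - a) / 2 ^ Suc k" "y - m = (b - a) / 2 ^ Suc k" "x < m" "m < y"
    using xy by (auto simp: m_def field_simps)
  ultimately show ?case by blast
qed

lemma shrinking_intervals_with_slope_ge:
  fixes f :: "real \<Rightarrow> real"
  assumes "a < b" "f a \<noteq> f b"
  obtains c :: real and X Y :: "nat \<Rightarrow> real"
  where "c > 0" "\<And>k. X k < Y k" "\<And>m n. m < n \<Longrightarrow> 2 * (Y n - X n) \<le> Y m - X m"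
    "\<And>k. c * (Y k - X k) \<le> \<bar>f (Y k) - f (X k)\<bar>"
proof -
  define c where "c = \<bar>f b - f a\<bar> / (b - a)"
  have c_pos: "c > 0" using assms by (simp add: c_def)
  have "c * (b - a) \<le> \<bar>f b - f a\<bar>" using assms(1) by (simp add: c_def)
  then have "\<forall>k. \<exists>x y. x < y \<and> y - x = (b - a) / 2 ^ k \<and> c * (y - x) \<le> \<bar>f y - f x\<bar>"
    using dyadic_subinterval_with_slope_ge[OF assms(1)] by blast
  then obtain X Y where XY: "\<And>k. X k < Y k" "\<And>k. Y k - X k = (b - a) / 2 ^ k"
    "\<And>k. c * (Y k - X k) \<le> \<bar>f (Y k) - f (X k)\<bar>" by metis
  have gap: "2 * (Y n - X n) \<le> Y m - X m" if "m < n" for m n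
  proof -
    have "(2::real) ^ Suc m \<le> 2 ^ n" using that by (intro power_increasing) auto
    then have "(b - a) * (2 * 2 ^ m) \<le> (b - a) * 2 ^ n"
      using assms(1) by (intro mult_left_mono) auto
    then show ?thesis using assms(1) by (simp add: XY(2) field_simps)
  qed
  show ?thesis using c_pos XY(1) gap XY(3) by (rule that[of c X Y])
qed

lemma compact_on_FreeR_no_separated_sequence:
  fixes \<phi> :: "nat \<Rightarrow> (real \<Rightarrow> real) \<Rightarrow> real"
  assumes "compact_on_FreeR T" and "\<And>n. \<phi> n \<in> FreeR" and "\<And>n. dnorm (\<phi> n) \<le> 1"
    and "\<And>n. T (\<phi> n) \<in> FreeR" and "\<epsilon> > 0"
    and separated: "\<And>m n. m < n \<Longrightarrow>
      \<exists>g. g \<in> Lip0 \<and> lipnorm g \<le> 1 \<and> \<epsilon> \<le> \<bar>T (\<phi> m) g - T (\<phi> n) g\<bar>"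
  shows False
proof -
  obtain r \<psi> where r: "strict_mono r" and \<psi>: "\<psi> \<in> FreeR"
    and lim: "(\<lambda>n. dnorm (\<lambda>g. T (\<phi> (r n)) g - \<psi> g)) \<longlonglongrightarrow> 0"
    using assms(1-3) unfolding compact_on_FreeR_def by blast
  have "\<forall>\<^sub>F n in sequentially. dnorm (\<lambda>g. T (\<phi> (r n)) g - \<psi> g) < \<epsilon> / 2"
    by (rule order_tendstoD(2)[OF lim]) (use \<open>\<epsilon> > 0\<close> in simp)
  then obtain N where N: "\<And>n. n \<ge> N \<Longrightarrow> dnorm (\<lambda>g. T (\<phi> (r n)) g - \<psi> g) < \<epsilon> / 2"
    unfolding eventually_sequentially by blast
  have close: "\<bar>T (\<phi> (r n)) g - \<psi> g\<bar> < \<epsilon> / 2" if "n \<ge> N" "g \<in> Lip0" "lipnorm g \<le> 1" for n g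
    using abs_diff_le_dnorm_diff[OF assms(4)[of "r n"] \<psi> that(2,3)] N[OF that(1)] by linarith
  obtain g where "g \<in> Lip0" "lipnorm g \<le> 1" "\<epsilon> \<le> \<bar>T (\<phi> (r N)) g - T (\<phi> (r (Suc N))) g\<bar>"
    using separated[of "r N" "r (Suc N)"] r by (auto simp: strict_mono_def)
  with close[of N g] close[of "Suc N" g] show False by linarith
qed

theorem mainTheorem11:
  fixes f :: "real \<Rightarrow> real" and T :: "((real \<Rightarrow> real) \<Rightarrow> real) \<Rightarrow> ((real \<Rightarrow> real) \<Rightarrow> real)"
  assumes "\<exists>C. C-lipschitz_on UNIV f" and "f 0 = 0"
    and "linear_on_FreeR T" and "bounded_on_FreeR T"
    and "\<forall>x. T (delta x) = delta (f x)"
    and "compact_on_FreeR T"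
  shows "f = (\<lambda>_. 0)"
proof (rule ccontr)
  assume "f \<noteq> (\<lambda>_. 0)"
  then obtain a0 where "f a0 \<noteq> 0" by blast
  with \<open>f 0 = 0\<close> have ab: "min a0 0 < max a0 0" "f (min a0 0) \<noteq> f (max a0 0)"
    by (cases "a0 = 0"; auto simp: min_def max_def)+
  obtain c and X Y :: "nat \<Rightarrow> real" where c: "c > 0" and XY: "\<And>k. X k < Y k"
    "\<And>m n. m < n \<Longrightarrow> 2 * (Y n - X n) \<le> Y m - X m" "\<And>k. c * (Y k - X k) \<le> \<bar>f (Y k) - f (X k)\<bar>"
    using shrinking_intervals_with_slope_ge[OF ab] by blast
  define \<phi> where "\<phi> k = molecule (X k) (Y k)" for k
  have separated: "\<exists>g. g \<in> Lip0 \<and> lipnorm g \<le> 1 \<and> c / 2 \<le> \<bar>T (\<phi> m) g - T (\<phi> n) g\<bar>" if mn: "m < n" for m n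
  proof -
    obtain g where "g \<in> Lip0" "lipnorm g \<le> 1"
      "c / 2 \<le> \<bar>(g (f (Y n)) - g (f (X n))) / (Y n - X n) - (g (f (Y m)) - g (f (X m))) / (Y m - X m)\<bar>"
      by (rule exists_Lip0_separating_difference_quotients[OF XY(1) XY(1) XY(2)[OF mn] XY(3)])
    then show ?thesis
      using image_of_molecule[OF assms(3,5)] by (auto simp: \<phi>_def abs_minus_commute)
  qed
  have \<phi>: "\<phi> k \<in> FreeR" "dnorm (\<phi> k) \<le> 1" "T (\<phi> k) \<in> FreeR" for k
    using molecule_in_FreeR dnorm_molecule_le_1 XY(1)[of k] assms(3)
    unfolding \<phi>_def linear_on_FreeR_def by (auto simp: less_imp_neq)
  show False
    using compact_on_FreeR_no_separated_sequence[where \<phi> = \<phi> and \<epsilon> = "c / 2", OF assms(6) \<phi> _ separated] c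
    by simp
qed

end
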